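(* Every 4-regular graph with girth 5 has a strong edge-coloring using at most 22 colors.
   Context: A strong edge-coloring of a graph is a proper edge-coloring in which, in addition, no two edges of the same color lie on a common path of length three. The girth of a graph is the length of its shortest cycle (a loop counts as a cycle of length 1 and a pair of parallel edges as a cycle of length 2). *)

theory Defs
  imports Main "HOL-Library.Extended_Nat"
begin

text \<open>A finite simple graph: finite vertex set V and a set E of 2-element subsets of V.
  (A multigraph of girth 5 has no loops or parallel edges, hence is simple.)\<close>
definition simple_graph :: "'a set \<Rightarrow> 'a set set \<Rightarrow> bool" where
  "simple_graph V E \<longleftrightarrow> finite V \<and> (\<forall>e\<in>E. \<exists>u v. u \<in> V \<and> v \<in> V \<and> u \<noteq> v \<and> e = {u, v})"

definition degree :: "'a set set \<Rightarrow> 'a \<Rightarrow> nat" where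
  "degree E v = card {e \<in> E. v \<in> e}"

definition regular :: "'a set \<Rightarrow> 'a set set \<Rightarrow> nat \<Rightarrow> bool" where
  "regular V E d \<longleftrightarrow> (\<forall>v\<in>V. degree E v = d)"

definition is_cycle :: "'a set set \<Rightarrow> 'a list \<Rightarrow> bool" where
  "is_cycle E vs \<longleftrightarrow> length vs \<ge> 3 \<and> distinct vs \<and>
     (\<forall>i < length vs. {vs ! i, vs ! ((i + 1) mod length vs)} \<in> E)"

text \<open>Girth: length of a shortest cycle (infinity for forests).\<close>
definition girth :: "'a set set \<Rightarrow> enat" where
  "girth E = (INF vs \<in> {vs. is_cycle E vs}. enat (length vs))"

definition path3 :: "'a set set \<Rightarrow> 'a \<Rightarrow> 'a \<Rightarrow> 'a \<Rightarrow> 'a \<Rightarrow> bool" where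
  "path3 E a b c d \<longleftrightarrow> distinct [a, b, c, d] \<and> {a, b} \<in> E \<and> {b, c} \<in> E \<and> {c, d} \<in> E"

definition proper_edge_coloring :: "'a set set \<Rightarrow> ('a set \<Rightarrow> 'c) \<Rightarrow> bool" where
  "proper_edge_coloring E col \<longleftrightarrow>
     (\<forall>e\<in>E. \<forall>f\<in>E. e \<noteq> f \<and> e \<inter> f \<noteq> {} \<longrightarrow> col e \<noteq> col f)"

text \<open>Strong edge-coloring: proper, and no two edges of the same colour lie on a common
  path of length three (the only pair on such a path not already sharing a vertex is
  its first and last edge).\<close>
definition strong_edge_coloring :: "'a set set \<Rightarrow> ('a set \<Rightarrow> 'c) \<Rightarrow> bool" where
  "strong_edge_coloring E col \<longleftrightarrow> proper_edge_coloring E col \<and>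
     (\<forall>a b c d. path3 E a b c d \<longrightarrow> col {a, b} \<noteq> col {c, d})"

end

theory Submission
  imports Defs
begin

(* Call two edges conflicting if they share a vertex or are joined by an edge. In a 4-regular
  graph every edge conflicts with at most 24 others, so greedy colouring uses 25 colours; the
  point is to save three colours at every edge.

  Choose a maximal set R of vertices at pairwise distance greater than 7. Around each root r fix
  a neighbour s, three pairwise non-conflicting edges T that all conflict with every edge at r,
  and two non-conflicting edges Q that conflict with rs; girth five makes this possible.
  Precolour every T-edge with colour 0 and every Q-edge with colour 1: configurations of distinct
  roots lie too far apart to interfere. Colour the remaining edges greedily, farthest from R
  first, then the edges at the roots, the edges rs last. An edge away from R has a neighbouring
  vertex closer to R whose at least three uncoloured edges come later; an edge at r other than
  rs sees the three T-edges in one colour and rs comes later; rs sees the five edges of T and Q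
  in two colours. So at most 21 colours are ever blocked. *)

section \<open>Greedy colouring with a precoloured part\<close>

lemma proper_colouring_extend:
  fixes col :: "'b \<Rightarrow> nat"
  assumes C_sym: "\<And>y z. C y z \<Longrightarrow> C z y" and C_irrefl: "\<And>y. \<not> C y y"
    and proper: "\<forall>y\<in>A. \<forall>z\<in>A. C y z \<longrightarrow> col y \<noteq> col z"
    and "finite A" and few: "card (col ` {y\<in>A. C x y}) < k"
  obtains c where "c < k" "\<forall>y\<in>insert x A. \<forall>z\<in>insert x A. C y z \<longrightarrow> (col(x := c)) y \<noteq> (col(x := c)) z"
proof -
  have "\<not> {..<k} \<subseteq> col ` {y\<in>A. C x y}"
    using card_mono[of "col ` {y\<in>A. C x y}" "{..<k}"] \<open>finite A\<close> few by auto
  then obtain c where "c < k" "\<forall>y\<in>A. C x y \<longrightarrow> col y \<noteq> c"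
    by blast
  moreover from this(2) have "\<forall>y\<in>insert x A. \<forall>z\<in>insert x A. C y z \<longrightarrow> (col(x := c)) y \<noteq> (col(x := c)) z"
    using proper C_sym C_irrefl by (metis fun_upd_apply insert_iff)
  ultimately show thesis
    using that by blast
qed

lemma greedy_colouring_extension:
  fixes C :: "'b \<Rightarrow> 'b \<Rightarrow> bool" and rank :: "'b \<Rightarrow> nat" and pre :: "'b \<Rightarrow> nat"
  assumes "finite X" "finite P" "X \<inter> P = {}"
    and C_sym: "\<And>x y. C x y \<Longrightarrow> C y x" and C_irrefl: "\<And>x. \<not> C x x"
    and pre_range: "\<And>x. x \<in> P \<Longrightarrow> pre x < k"
    and pre_proper: "\<And>x y. x \<in> P \<Longrightarrow> y \<in> P \<Longrightarrow> C x y \<Longrightarrow> pre x \<noteq> pre y"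
    and few_blocked: "\<And>x. x \<in> X \<Longrightarrow>
      card {y\<in>X. C x y \<and> rank y \<le> rank x} + card (pre ` {y\<in>P. C x y}) < k"
  shows "\<exists>col. (\<forall>x\<in>X \<union> P. col x < k) \<and> (\<forall>x\<in>X \<union> P. \<forall>y\<in>X \<union> P. C x y \<longrightarrow> col x \<noteq> col y)"
proof -
  define good where "good S col \<longleftrightarrow> (\<forall>x\<in>P. col x = pre x) \<and> (\<forall>x\<in>S \<union> P. col x < k) \<and>
    (\<forall>x\<in>S \<union> P. \<forall>y\<in>S \<union> P. C x y \<longrightarrow> col x \<noteq> col y)" for S col
  have "S \<subseteq> X \<Longrightarrow> \<exists>col. good S col" if "finite S" for S
    using that
  proof (induction S rule: finite_ranking_induct[where f = rank])
    case empty
    show ?case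
      using pre_range pre_proper unfolding good_def by (intro exI[of _ pre]) auto
  next
    case (insert x S)
    then obtain col where col_P: "\<forall>y\<in>P. col y = pre y" and col_range: "\<forall>y\<in>S \<union> P. col y < k"
      and col_proper: "\<forall>y\<in>S \<union> P. \<forall>z\<in>S \<union> P. C y z \<longrightarrow> col y \<noteq> col z"
      unfolding good_def by blast
    have "x \<in> X" "x \<notin> P"
      using insert.prems \<open>X \<inter> P = {}\<close> by auto
    have fin: "finite {y\<in>S. C x y}" "finite {y\<in>P. C x y}" "finite (S \<union> P)"
      using insert.hyps(1) \<open>finite P\<close> by auto
    have "col ` {y\<in>S \<union> P. C x y} \<subseteq> col ` {y\<in>S. C x y} \<union> pre ` {y\<in>P. C x y}"
      using col_P by auto
    then have "card (col ` {y\<in>S \<union> P. C x y}) \<le> card (col ` {y\<in>S. C x y}) + card (pre ` {y\<in>P. C x y})"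
      using fin card_Un_le[of "col ` {y\<in>S. C x y}" "pre ` {y\<in>P. C x y}"] card_mono by (meson finite_UnI finite_imageI le_trans)
    moreover have "card (col ` {y\<in>S. C x y}) \<le> card {y\<in>S. C x y}"
      using fin(1) by (rule card_image_le)
    moreover have "card {y\<in>S. C x y} \<le> card {y\<in>X. C x y \<and> rank y \<le> rank x}"
      by (rule card_mono) (use \<open>finite X\<close> insert in auto)
    ultimately have "card (col ` {y\<in>S \<union> P. C x y}) < k"
      using few_blocked[OF \<open>x \<in> X\<close>] by linarith
    with proper_colouring_extend[OF C_sym C_irrefl col_proper fin(3)] obtain c where "c < k"
      and "\<forall>y\<in>insert x (S \<union> P). \<forall>z\<in>insert x (S \<union> P). C y z \<longrightarrow> (col(x := c)) y \<noteq> (col(x := c)) z"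
      by blast
    then have "good (insert x S) (col(x := c))"
      using col_P col_range \<open>x \<notin> P\<close> unfolding good_def by auto
    then show ?case by blast
  qed
  then obtain col where "good X col"
    using \<open>finite X\<close> by blast
  then show ?thesis
    unfolding good_def by blast
qed

(* N: the edges conflicting with the edge being coloured, P: the precoloured edges. The blocked
  colours are those of A (uncoloured, coloured no later) and of N \<inter> P; the bound saves one colour
  per edge of L (coloured later) and per edge of S beyond the colours that S uses. *)
lemma card_blocked_colours_le:
  assumes "finite N" "L \<subseteq> N - P" "S \<subseteq> N \<inter> P" "A \<subseteq> N - P - L"
  shows "card A + card (c ` (N \<inter> P)) + card L + card S \<le> card N + card (c ` S)"
proof -
  have fin: "finite (N - P)" "finite (N \<inter> P)" "finite L" "finite S"
    using assms by (auto intro: finite_subset)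
  have "card A \<le> card (N - P - L)"
    using assms(4) fin by (intro card_mono) auto
  also have "\<dots> = card (N - P) - card L"
    using assms(2) fin by (simp add: card_Diff_subset)
  finally have uncoloured: "card A + card L \<le> card (N - P)"
    using assms(2) fin card_mono[of "N - P" L] by linarith
  have "card (c ` (N \<inter> P)) \<le> card (c ` S \<union> c ` (N \<inter> P - S))"
    using fin by (intro card_mono) auto
  also have "\<dots> \<le> card (c ` S) + card (N \<inter> P - S)"
    using card_Un_le card_image_le fin by (meson add_left_mono finite_Diff order_trans)
  also have "\<dots> = card (c ` S) + card (N \<inter> P) - card S"
    using assms(3) fin by (simp add: card_Diff_subset card_mono)
  finally have coloured: "card (c ` (N \<inter> P)) + card S \<le> card (c ` S) + card (N \<inter> P)"
    using assms(3) fin card_mono[of "N \<inter> P" S] by linarith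
  show ?thesis
    using uncoloured coloured card_Int_Diff[OF assms(1), of P] by linarith
qed

section \<open>Walks and conflicting edges\<close>

fun reach_within :: "'a set set \<Rightarrow> nat \<Rightarrow> 'a \<Rightarrow> 'a \<Rightarrow> bool" where
  "reach_within E 0 u v \<longleftrightarrow> u = v"
| "reach_within E (Suc n) u v \<longleftrightarrow> reach_within E n u v \<or> (\<exists>w. reach_within E n u w \<and> {w, v} \<in> E)"

lemma reach_within_refl: "reach_within E n v v"
  by (induction n) auto

lemma reach_within_mono: "reach_within E n u v \<Longrightarrow> n \<le> m \<Longrightarrow> reach_within E m u v"
  by (induction m) (auto simp: le_Suc_eq)

lemma reach_within_step: "reach_within E n u w \<Longrightarrow> {w, v} \<in> E \<Longrightarrow> reach_within E (Suc n) u v"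
  by auto

lemma reach_within_trans:
  "reach_within E m u v \<Longrightarrow> reach_within E n v w \<Longrightarrow> reach_within E (m + n) u w"
  by (induction n arbitrary: w) auto

lemma reach_within_sym: "reach_within E n u v \<Longrightarrow> reach_within E n v u"
proof (induction n arbitrary: v)
  case (Suc n)
  show ?case
  proof (cases "reach_within E n u v")
    case False
    then obtain w where "reach_within E n u w" "{w, v} \<in> E"
      using Suc.prems by auto
    then have "reach_within E 1 v w" "reach_within E n w u"
      using Suc.IH by (auto simp: insert_commute)
    from reach_within_trans[OF this] show ?thesis
      by simp
  qed (use Suc.IH in simp)
qed simp

definition scattered :: "'a set set \<Rightarrow> nat \<Rightarrow> 'a set \<Rightarrow> bool" where
  "scattered E n R \<longleftrightarrow> (\<forall>r\<in>R. \<forall>r'\<in>R. r \<noteq> r' \<longrightarrow> \<not> reach_within E n r r')"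

lemma scattered_insert:
  assumes "scattered E n R" "\<forall>r\<in>R. \<not> reach_within E n r v"
  shows "scattered E n (insert v R)"
  using assms reach_within_sym[of E n v] unfolding scattered_def by blast

lemma exists_scattered_cover:
  assumes "finite V"
  obtains R where "R \<subseteq> V" "scattered E n R" "\<And>v. v \<in> V \<Longrightarrow> \<exists>r\<in>R. reach_within E n r v"
proof -
  let ?candidates = "{R. R \<subseteq> V \<and> scattered E n R}"
  have "finite ?candidates"
    using assms by simp
  moreover have "{} \<in> ?candidates"
    unfolding scattered_def by simp
  ultimately obtain R where "R \<in> ?candidates" and maximal: "\<forall>R'\<in>?candidates. R \<subseteq> R' \<longrightarrow> R = R'"
    using finite_has_maximal[of ?candidates] by blast
  then have R: "R \<subseteq> V" "scattered E n R"
    by simp_all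
  have "\<exists>r\<in>R. reach_within E n r v" if "v \<in> V" for v
  proof (rule ccontr)
    assume "\<not> (\<exists>r\<in>R. reach_within E n r v)"
    then have "scattered E n (insert v R)" "v \<notin> R"
      using scattered_insert[OF R(2)] reach_within_refl[of E n v] by blast+
    then show False
      using maximal R(1) \<open>v \<in> V\<close> by blast
  qed
  with R show thesis
    using that by blast
qed

definition conflict :: "'a set set \<Rightarrow> 'a set \<Rightarrow> 'a set \<Rightarrow> bool" where
  "conflict E e f \<longleftrightarrow> e \<noteq> f \<and> (\<exists>g\<in>E. g \<inter> e \<noteq> {} \<and> g \<inter> f \<noteq> {})"

lemma conflict_sym: "conflict E e f \<longleftrightarrow> conflict E f e"
  unfolding conflict_def by blast

lemma conflict_irrefl [simp]: "\<not> conflict E e e"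
  unfolding conflict_def by blast

lemma conflictI: "g \<in> E \<Longrightarrow> u \<in> g \<Longrightarrow> u \<in> e \<Longrightarrow> w \<in> g \<Longrightarrow> w \<in> f \<Longrightarrow> e \<noteq> f \<Longrightarrow> conflict E e f"
  unfolding conflict_def by blast

lemma strong_edge_coloringI:
  assumes "\<And>e f. e \<in> E \<Longrightarrow> f \<in> E \<Longrightarrow> conflict E e f \<Longrightarrow> col e \<noteq> col f"
  shows "strong_edge_coloring E col"
  unfolding strong_edge_coloring_def proper_edge_coloring_def
proof (intro conjI ballI allI impI)
  fix e f assume "e \<in> E" "f \<in> E" "e \<noteq> f \<and> e \<inter> f \<noteq> {}"
  then show "col e \<noteq> col f"
    using assms unfolding conflict_def by blast
next
  fix a b c d assume path: "path3 E a b c d"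
  then have "conflict E {a, b} {c, d}"
    unfolding path3_def by (intro conflictI[where g = "{b, c}" and u = b and w = c]) auto
  then show "col {a, b} \<noteq> col {c, d}"
    using assms path unfolding path3_def by blast
qed

locale regular_simple_graph =
  fixes V :: "'a set" and E :: "'a set set" and d :: nat
  assumes simple: "simple_graph V E" and regular: "regular V E d"
begin

definition nbrs :: "'a \<Rightarrow> 'a set" where
  "nbrs v = {w. {v, w} \<in> E}"

definition incident :: "'a \<Rightarrow> 'a set set" where
  "incident v = {f \<in> E. v \<in> f}"

lemma mem_nbrs_iff [simp]: "w \<in> nbrs v \<longleftrightarrow> {v, w} \<in> E"
  unfolding nbrs_def by simp

lemma finite_V: "finite V"
  using simple unfolding simple_graph_def by blast

lemma edgeE:
  assumes "e \<in> E"
  obtains u v where "u \<in> V" "v \<in> V" "u \<noteq> v" "e = {u, v}"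
  using simple assms unfolding simple_graph_def by blast

lemma edge_neq: "{u, v} \<in> E \<Longrightarrow> u \<noteq> v"
  by (metis edgeE doubleton_eq_iff insert_absorb2)

lemma edge_vertices: "{u, v} \<in> E \<Longrightarrow> u \<in> V \<and> v \<in> V"
  by (metis edgeE doubleton_eq_iff)

lemma edge_memE:
  assumes "e \<in> E" "v \<in> e"
  obtains w where "e = {v, w}"
  using assms by (metis edgeE insertE insert_commute singletonD)

lemma finite_E: "finite E"
proof -
  have "E \<subseteq> Pow V"
    by (auto elim: edgeE)
  then show ?thesis
    using finite_V by (simp add: finite_subset)
qed

lemma finite_nbrs: "finite (nbrs v)"
  using finite_V edge_vertices by (auto intro: finite_subset[of _ V])

lemma card_incident: "v \<in> V \<Longrightarrow> card (incident v) = d"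
  using regular unfolding regular_def degree_def incident_def by simp

lemma card_nbrs:
  assumes "v \<in> V"
  shows "card (nbrs v) = d"
proof -
  have "incident v = (\<lambda>w. {v, w}) ` nbrs v"
  proof
    show "incident v \<subseteq> (\<lambda>w. {v, w}) ` nbrs v"
    proof
      fix f assume "f \<in> incident v"
      then have "f \<in> E" "v \<in> f"
        unfolding incident_def by auto
      then obtain w where "f = {v, w}"
        by (rule edge_memE)
      with \<open>f \<in> E\<close> show "f \<in> (\<lambda>w. {v, w}) ` nbrs v"
        by auto
    qed
  qed (auto simp: incident_def)
  moreover have "inj_on (\<lambda>w. {v, w}) (nbrs v)"
    by (auto simp: inj_on_def doubleton_eq_iff dest: edge_neq)
  ultimately show ?thesis
    using card_incident[OF assms] card_image by metis
qed

lemma card_nbrs_Diff: "{v, w} \<in> E \<Longrightarrow> card (nbrs v - {w}) = d - 1"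
  using card_nbrs edge_vertices finite_nbrs by simp

lemma card_incident_Diff: "{v, w} \<in> E \<Longrightarrow> card (incident v - {{v, w}}) = d - 1"
  using card_incident edge_vertices by (simp add: incident_def)

lemma reach_within_edge_mem:
  assumes "h \<in> E" "p \<in> h" "q \<in> h" "reach_within E n r q"
  shows "reach_within E (Suc n) r p"
proof (cases "p = q")
  case False
  then have "h = {q, p}"
    using assms(1-3) by (auto elim!: edgeE)
  then show ?thesis
    using assms by auto
qed (use assms reach_within_mono in auto)

lemma not_conflictI:
  assumes "{w, x} \<inter> {y, z} = {}" "{w, y} \<notin> E" "{w, z} \<notin> E" "{x, y} \<notin> E" "{x, z} \<notin> E"
  shows "\<not> conflict E {w, x} {y, z}"
proof
  assume "conflict E {w, x} {y, z}"
  then obtain g where g: "g \<in> E" "g \<inter> {w, x} \<noteq> {}" "g \<inter> {y, z} \<noteq> {}"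
    unfolding conflict_def by blast
  then obtain p q where "g = {p, q}"
    by (auto elim: edgeE)
  then show False
    using g assms by (auto simp: insert_commute)
qed

definition conflicts_through :: "'a \<Rightarrow> 'a \<Rightarrow> 'a set set" where
  "conflicts_through u v = (incident u - {{u, v}}) \<union> (\<Union>w\<in>nbrs u - {v}. incident w - {{u, w}})"

lemma conflicts_subset:
  assumes "{u, v} \<in> E"
  shows "{f \<in> E. conflict E {u, v} f} \<subseteq> conflicts_through u v \<union> conflicts_through v u"
proof
  fix f assume "f \<in> {f \<in> E. conflict E {u, v} f}"
  then obtain g where f: "f \<in> E" "f \<noteq> {u, v}" and g: "g \<in> E" "g \<inter> {u, v} \<noteq> {}" "g \<inter> f \<noteq> {}"
    unfolding conflict_def by blast
  show "f \<in> conflicts_through u v \<union> conflicts_through v u"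
  proof (cases "u \<in> f \<or> v \<in> f")
    case True
    then show ?thesis
      using f unfolding conflicts_through_def incident_def by (auto simp: insert_commute)
  next
    case False
    obtain x where x: "x \<in> g" "x \<in> {u, v}"
      using g(2) by blast
    then obtain w where w: "g = {x, w}"
      using g(1) by (auto elim: edge_memE)
    then have "w \<in> f"
      using g(3) x False by auto
    have "w \<in> nbrs x - {u, v}"
      using g(1) w \<open>w \<in> f\<close> False by auto
    moreover have "f \<in> incident w - {{x, w}}"
      using f(1) \<open>w \<in> f\<close> x False unfolding incident_def by auto
    ultimately show ?thesis
      using x(2) unfolding conflicts_through_def by blast
  qed
qed

lemma card_conflicts_through:
  assumes "{u, v} \<in> E"
  shows "card (conflicts_through u v) \<le> d * (d - 1)"
proof -
  have "card (\<Union>w\<in>nbrs u - {v}. incident w - {{u, w}}) \<le> (\<Sum>w\<in>nbrs u - {v}. card (incident w - {{u, w}}))"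
    using finite_nbrs by (intro card_UN_le) simp
  also have "\<dots> = (\<Sum>w\<in>nbrs u - {v}. d - 1)"
    using card_incident_Diff by (intro sum.cong) (auto simp: insert_commute)
  also have "\<dots> = (d - 1) * (d - 1)"
    using card_nbrs_Diff[OF assms] by simp
  finally have "card (conflicts_through u v) \<le> (d - 1) + (d - 1) * (d - 1)"
    using card_incident_Diff[OF assms] unfolding conflicts_through_def
    by (metis (no_types, lifting) card_Un_le add_mono order_trans order_refl)
  also have "\<dots> = d * (d - 1)"
    by (cases d) auto
  finally show ?thesis .
qed

lemma card_conflicts_le:
  assumes "e \<in> E"
  shows "card {f \<in> E. conflict E e f} \<le> 2 * d * (d - 1)"
proof -
  obtain u v where e: "e = {u, v}"
    using assms by (auto elim: edgeE)
  have "finite (conflicts_through u v \<union> conflicts_through v u)"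
    using finite_E unfolding conflicts_through_def incident_def by (auto simp: finite_nbrs)
  then have "card {f \<in> E. conflict E e f} \<le> card (conflicts_through u v \<union> conflicts_through v u)"
    using conflicts_subset assms e by (intro card_mono) auto
  also have "\<dots> \<le> card (conflicts_through u v) + card (conflicts_through v u)"
    by (rule card_Un_le)
  also have "\<dots> \<le> d * (d - 1) + d * (d - 1)"
    using card_conflicts_through assms e by (intro add_mono) (auto simp: insert_commute)
  finally show ?thesis
    by simp
qed
end

section \<open>Girth at least five\<close>

lemma girth_le_cycle_length: "is_cycle E vs \<Longrightarrow> girth E \<le> enat (length vs)"
  unfolding girth_def by (rule INF_lower) simp

locale quartic_girth5_graph = regular_simple_graph V E 4 for V :: "'a set" and E :: "'a set set" +
  assumes girth_ge_5: "5 \<le> girth E"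
begin

lemma cycle_length_ge_5:
  assumes "is_cycle E vs"
  shows "5 \<le> length vs"
proof -
  have "(5::enat) \<le> enat (length vs)"
    using girth_ge_5 girth_le_cycle_length[OF assms] by (rule order_trans)
  then show ?thesis
    by (simp add: numeral_eq_enat)
qed

lemma no_triangle:
  assumes "{a, b} \<in> E" "{b, c} \<in> E" "{c, a} \<in> E"
  shows False
proof -
  have "is_cycle E [a, b, c]"
    unfolding is_cycle_def
  proof (intro conjI allI impI)
    fix i assume "i < length [a, b, c]"
    then have "i = 0 \<or> i = 1 \<or> i = 2"
      by auto
    then show "{[a, b, c] ! i, [a, b, c] ! ((i + 1) mod length [a, b, c])} \<in> E"
      using assms by auto
  qed (use assms edge_neq in auto)
  from cycle_length_ge_5[OF this] show False
    by simp
qed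

lemma no_square:
  assumes "{a, b} \<in> E" "{b, c} \<in> E" "{c, x} \<in> E" "{x, a} \<in> E" "a \<noteq> c" "b \<noteq> x"
  shows False
proof -
  have "is_cycle E [a, b, c, x]"
    unfolding is_cycle_def
  proof (intro conjI allI impI)
    fix i assume "i < length [a, b, c, x]"
    then have "i = 0 \<or> i = 1 \<or> i = 2 \<or> i = 3"
      by auto
    then show "{[a, b, c, x] ! i, [a, b, c, x] ! ((i + 1) mod length [a, b, c, x])} \<in> E"
      using assms by auto
  qed (use assms edge_neq in auto)
  from cycle_length_ge_5[OF this] show False
    by simp
qed

lemma common_nbr_unique: "x \<noteq> y \<Longrightarrow> a \<in> nbrs x \<inter> nbrs y \<Longrightarrow> b \<in> nbrs x \<inter> nbrs y \<Longrightarrow> a = b"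
  using no_square[of x a y b] by (auto simp: insert_commute)

lemma card_common_nbrs_le_1: "x \<noteq> y \<Longrightarrow> card (nbrs x \<inter> nbrs y) \<le> 1"
  using common_nbr_unique finite_nbrs by (simp add: card_le_Suc0_iff_eq)

lemma exists_nbr_avoiding_nbrs:
  assumes "{x, r} \<in> E" "finite Y" "card Y \<le> 2" "x \<notin> Y"
  obtains w where "{x, w} \<in> E" "w \<noteq> r" "\<And>y. y \<in> Y \<Longrightarrow> {y, w} \<notin> E"
proof -
  have "card ((nbrs x - {r}) \<inter> (\<Union>y\<in>Y. nbrs y)) \<le> card (\<Union>y\<in>Y. nbrs x \<inter> nbrs y)"
    using assms(2) finite_nbrs by (intro card_mono) auto
  also have "\<dots> \<le> (\<Sum>y\<in>Y. card (nbrs x \<inter> nbrs y))"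
    using assms(2) by (rule card_UN_le)
  also have "\<dots> \<le> (\<Sum>y\<in>Y. 1)"
    using assms(4) by (intro sum_mono card_common_nbrs_le_1) auto
  also have "\<dots> < card (nbrs x - {r})"
    using assms(3) card_nbrs_Diff[OF assms(1)] by simp
  finally have "\<not> nbrs x - {r} \<subseteq> (\<Union>y\<in>Y. nbrs y)"
    by (metis Int_absorb2 less_irrefl)
  then obtain w where "w \<in> nbrs x - {r}" "\<forall>y\<in>Y. w \<notin> nbrs y"
    by blast
  then show thesis
    by (intro that) auto
qed

lemma exists_independent_second_nbrs:
  assumes "{r, x1} \<in> E" "{r, x2} \<in> E" "{r, x3} \<in> E" "distinct [x1, x2, x3]"
  obtains y1 y2 y3 where "{x1, y1} \<in> E" "{x2, y2} \<in> E" "{x3, y3} \<in> E" "r \<notin> {y1, y2, y3}"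
    "{y1, y2} \<notin> E" "{y1, y3} \<notin> E" "{y2, y3} \<notin> E"
proof -
  have x_r: "{x1, r} \<in> E" "{x2, r} \<in> E" "{x3, r} \<in> E"
    using assms by (simp_all add: insert_commute)
  obtain y1 where y1: "{x1, y1} \<in> E" "y1 \<noteq> r"
    by (rule exists_nbr_avoiding_nbrs[OF x_r(1), of "{}"]) auto
  have "x2 \<noteq> y1"
    using no_triangle[of r x1 x2] assms y1 by (auto simp: insert_commute)
  obtain y2 where y2: "{x2, y2} \<in> E" "y2 \<noteq> r" "\<And>y. y \<in> {y1} \<Longrightarrow> {y, y2} \<notin> E"
    by (rule exists_nbr_avoiding_nbrs[OF x_r(2), of "{y1}"]) (use \<open>x2 \<noteq> y1\<close> in auto)
  have "x3 \<noteq> y1" "x3 \<noteq> y2"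
    using no_triangle[of r x1 x3] no_triangle[of r x2 x3] assms y1 y2 by (auto simp: insert_commute)
  obtain y3 where "{x3, y3} \<in> E" "y3 \<noteq> r" "\<And>y. y \<in> {y1, y2} \<Longrightarrow> {y, y3} \<notin> E"
    by (rule exists_nbr_avoiding_nbrs[OF x_r(3), of "{y1, y2}"]) (use \<open>x3 \<noteq> y1\<close> \<open>x3 \<noteq> y2\<close> in \<open>auto simp: card_insert_if\<close>)
  then show thesis
    using that y1 y2 by blast
qed

lemma exists_nonadjacent_nbr:
  assumes "{s, a} \<in> E" "{s, b} \<in> E" "a \<noteq> b" "{a, z} \<in> E" "B \<subseteq> nbrs b" "2 \<le> card B"
  obtains z' where "z' \<in> B" "{z, z'} \<notin> E"
proof -
  have "z \<noteq> b"
    using no_triangle[of s a b] assms(1,2,4) by (auto simp: insert_commute)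
  have "finite B"
    using assms(6) by (metis card.infinite not_numeral_le_zero)
  then obtain w1 w2 where w: "w1 \<in> B" "w2 \<in> B" "w1 \<noteq> w2"
    using assms(6) card_le_Suc0_iff_eq[of B] by auto
  moreover have "{w1, b} \<in> E" "{b, w2} \<in> E"
    using w assms(5) by (auto simp: insert_commute)
  ultimately have "\<not> ({z, w1} \<in> E \<and> {w2, z} \<in> E)"
    using no_square[of z w1 b w2] w \<open>z \<noteq> b\<close> by blast
  then show thesis
    using that w by (auto simp: insert_commute)
qed

lemma sum_card_nbrs_Int_le:
  assumes "finite C" "C \<subseteq> nbrs s" "finite Y" "s \<notin> Y"
  shows "(\<Sum>c\<in>C. card (nbrs c \<inter> Y)) \<le> card Y"
proof -
  have "(\<Sum>c\<in>C. card (nbrs c \<inter> Y)) = card (\<Union>c\<in>C. nbrs c \<inter> Y)"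
  proof (rule card_UN_disjoint[symmetric])
    show "\<forall>c\<in>C. \<forall>c'\<in>C. c \<noteq> c' \<longrightarrow> nbrs c \<inter> Y \<inter> (nbrs c' \<inter> Y) = {}"
    proof (intro ballI impI)
      fix c c' assume "c \<in> C" "c' \<in> C" "c \<noteq> c'"
      then have "s \<in> nbrs c \<inter> nbrs c'"
        using assms(2) by (auto simp: insert_commute)
      then have "y = s" if "y \<in> nbrs c \<inter> nbrs c'" for y
        using common_nbr_unique[OF \<open>c \<noteq> c'\<close> that] by blast
      then show "nbrs c \<inter> Y \<inter> (nbrs c' \<inter> Y) = {}"
        using assms(4) by blast
    qed
  qed (use assms(1,3) in auto)
  also have "\<dots> \<le> card Y"
    using assms(3) by (intro card_mono) auto
  finally show ?thesis .
qed

lemma exists_two_extendable_nbrs: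
  assumes "{r, s} \<in> E" "finite Y" "card Y \<le> 3" "s \<notin> Y"
  obtains a b where "a \<in> nbrs s - {r}" "b \<in> nbrs s - {r}" "a \<noteq> b"
    "2 \<le> card (nbrs a - insert s Y)" "2 \<le> card (nbrs b - insert s Y)"
proof -
  define avail where "avail c = nbrs c - insert s Y" for c
  have "{s, r} \<in> E"
    using assms(1) by (simp add: insert_commute)
  then have "card (nbrs s - {r}) = 3"
    using card_nbrs_Diff by simp
  then obtain c1 c2 c3 where C: "nbrs s - {r} = {c1, c2, c3}" "distinct [c1, c2, c3]"
    by (auto simp: card_3_iff)
  have c_s: "{c, s} \<in> E" if "c \<in> {c1, c2, c3}" for c
  proof -
    have "c \<in> nbrs s"
      using that C(1) by blast
    then show ?thesis
      by (simp add: insert_commute)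
  qed
  have avail_bounds: "3 \<le> card (avail c) + card (nbrs c \<inter> Y)" "card (avail c) \<le> 3"
    if "c \<in> {c1, c2, c3}" for c
  proof -
    have "card (nbrs c - {s}) = 3"
      using card_nbrs_Diff[OF c_s[OF that]] by simp
    moreover have "card (nbrs c - {s}) \<le> card (avail c \<union> (nbrs c \<inter> Y))"
      unfolding avail_def using assms(2) finite_nbrs by (intro card_mono) auto
    moreover have "card (avail c) \<le> card (nbrs c - {s})"
      unfolding avail_def using finite_nbrs by (intro card_mono) auto
    ultimately show "3 \<le> card (avail c) + card (nbrs c \<inter> Y)" "card (avail c) \<le> 3"
      using card_Un_le[of "avail c" "nbrs c \<inter> Y"] by linarith+
  qed
  have "{c1, c2, c3} \<subseteq> nbrs s"
    using C(1) by blast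
  then have "(\<Sum>c\<in>{c1, c2, c3}. card (nbrs c \<inter> Y)) \<le> card Y"
    using assms(2,4) by (intro sum_card_nbrs_Int_le) auto
  then have "card (nbrs c1 \<inter> Y) + card (nbrs c2 \<inter> Y) + card (nbrs c3 \<inter> Y) \<le> 3"
    using C(2) assms(3) by simp
  then have "(2 \<le> card (avail c1) \<and> 2 \<le> card (avail c2)) \<or> (2 \<le> card (avail c1) \<and> 2 \<le> card (avail c3))
      \<or> (2 \<le> card (avail c2) \<and> 2 \<le> card (avail c3))"
    using avail_bounds[of c1] avail_bounds[of c2] avail_bounds[of c3] by simp linarith
  then have "\<exists>a\<in>nbrs s - {r}. \<exists>b\<in>nbrs s - {r}. a \<noteq> b \<and> 2 \<le> card (avail a) \<and> 2 \<le> card (avail b)"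
    unfolding C(1) using C(2) by auto
  then obtain a b where "a \<in> nbrs s - {r}" "b \<in> nbrs s - {r}" "a \<noteq> b"
    "2 \<le> card (avail a)" "2 \<le> card (avail b)"
    by blast
  then show thesis
    unfolding avail_def by (rule that)
qed

lemma exists_nonadjacent_second_nbrs:
  assumes "{r, s} \<in> E" "finite Y" "card Y \<le> 3" "s \<notin> Y"
  obtains a b z z' where "{s, a} \<in> E" "{s, b} \<in> E" "r \<notin> {a, b}" "a \<noteq> b"
    "{a, z} \<in> E" "{b, z'} \<in> E" "z \<notin> insert s Y" "z' \<notin> insert s Y" "{z, z'} \<notin> E"
proof -
  obtain a b where ab: "a \<in> nbrs s - {r}" "b \<in> nbrs s - {r}" "a \<noteq> b"
    "2 \<le> card (nbrs a - insert s Y)" "2 \<le> card (nbrs b - insert s Y)"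
    using exists_two_extendable_nbrs[OF assms] by blast
  then have "nbrs a - insert s Y \<noteq> {}"
    by (metis card.empty not_numeral_le_zero)
  then obtain z where z: "z \<in> nbrs a - insert s Y"
    by blast
  have "{s, a} \<in> E" "{s, b} \<in> E" "{a, z} \<in> E"
    using ab(1,2) z by auto
  moreover obtain z' where "z' \<in> nbrs b - insert s Y" "{z, z'} \<notin> E"
    by (rule exists_nonadjacent_nbr[of s a b z "nbrs b - insert s Y"]) (use calculation ab in auto)
  ultimately show thesis
    using that ab(1-3) z by auto
qed

end

section \<open>Configurations at the roots\<close>

context quartic_girth5_graph
begin

definition root_config :: "'a \<Rightarrow> 'a \<Rightarrow> 'a set set \<Rightarrow> 'a set set \<Rightarrow> bool" where
  "root_config r s T Q \<longleftrightarrow> {r, s} \<in> E \<and> T \<subseteq> E \<and> Q \<subseteq> E \<and> card T = 3 \<and> card Q = 2 \<and> T \<inter> Q = {} \<and>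
     (\<forall>f\<in>T \<union> Q. r \<notin> f \<and> (\<forall>v\<in>f. reach_within E 3 r v)) \<and> pairwise disjnt (T \<union> Q) \<and>
     pairwise (\<lambda>f g. \<not> conflict E f g) T \<and> pairwise (\<lambda>f g. \<not> conflict E f g) Q \<and>
     (\<forall>x. {r, x} \<in> E \<longrightarrow> (\<forall>f\<in>T. conflict E {r, x} f)) \<and> (\<forall>f\<in>Q. conflict E {r, s} f)"

lemma root_configD:
  assumes "root_config r s T Q"
  shows "{r, s} \<in> E" "T \<subseteq> E" "Q \<subseteq> E" "card T = 3" "card Q = 2" "T \<inter> Q = {}"
    and "f \<in> T \<union> Q \<Longrightarrow> r \<notin> f" "f \<in> T \<union> Q \<Longrightarrow> v \<in> f \<Longrightarrow> reach_within E 3 r v"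
    and "pairwise disjnt (T \<union> Q)" "pairwise (\<lambda>f g. \<not> conflict E f g) T" "pairwise (\<lambda>f g. \<not> conflict E f g) Q"
    and "{r, x} \<in> E \<Longrightarrow> f \<in> T \<Longrightarrow> conflict E {r, x} f" "f \<in> Q \<Longrightarrow> conflict E {r, s} f"
  using assms unfolding root_config_def by blast+

(* The root r has neighbours s, x1, x2, x3; the T-edges are x1 y1, x2 y2, x3 y3, and the Q-edges
  a z, b z' hang off two further neighbours a, b of s. *)
context
  fixes r s x1 x2 x3 y1 y2 y3 a b z z' :: 'a
  assumes r_s: "{r, s} \<in> E" and r_x: "{r, x1} \<in> E" "{r, x2} \<in> E" "{r, x3} \<in> E"
    and s_x: "distinct [s, x1, x2, x3]"
    and x_y: "{x1, y1} \<in> E" "{x2, y2} \<in> E" "{x3, y3} \<in> E" and r_y: "r \<notin> {y1, y2, y3}"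
    and y_y: "{y1, y2} \<notin> E" "{y1, y3} \<notin> E" "{y2, y3} \<notin> E"
    and s_ab: "{s, a} \<in> E" "{s, b} \<in> E" and r_ab: "r \<notin> {a, b}" and "a \<noteq> b"
    and ab_z: "{a, z} \<in> E" "{b, z'} \<in> E" and z_Y: "z \<notin> {s, y1, y2, y3}" "z' \<notin> {s, y1, y2, y3}"
    and "{z, z'} \<notin> E"
begin

lemma config_vertices_distinct: "distinct [r, s, x1, y1, x2, y2, x3, y3, a, z, b, z']"
proof -
  have edge_ends: "r \<noteq> s" "r \<noteq> x1" "r \<noteq> x2" "r \<noteq> x3" "x1 \<noteq> y1" "x2 \<noteq> y2" "x3 \<noteq> y3"
      "s \<noteq> a" "s \<noteq> b" "a \<noteq> z" "b \<noteq> z'"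
    using edge_neq r_s r_x x_y s_ab ab_z by blast+
  have by_triangle: "y1 \<notin> {s, x2, x3}" "y2 \<notin> {s, x1, x3}" "y3 \<notin> {s, x1, x2}"
      "a \<notin> {x1, x2, x3}" "b \<notin> {x1, x2, x3}" "z \<notin> {r, b}" "z' \<notin> {r, a}"
    using no_triangle[of r x1 x2] no_triangle[of r x1 x3] no_triangle[of r x2 x3]
      no_triangle[of r x1 s] no_triangle[of r x2 s] no_triangle[of r x3 s]
      no_triangle[of r s x1] no_triangle[of r s x2] no_triangle[of r s x3]
      no_triangle[of r s a] no_triangle[of r s b] no_triangle[of s a b]
      r_s r_x x_y s_ab ab_z by (auto simp: insert_commute)
  have by_square: "y1 \<notin> {y2, y3, a, b}" "y2 \<notin> {y3, a, b}" "y3 \<notin> {a, b}"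
      "z \<notin> {x1, x2, x3, z'}" "z' \<notin> {x1, x2, x3}"
    using no_square[of r x1 y1 x2] no_square[of r x1 y1 x3] no_square[of r x2 y2 x3]
      no_square[of r x1 a s] no_square[of r x2 a s] no_square[of r x3 a s]
      no_square[of r x1 b s] no_square[of r x2 b s] no_square[of r x3 b s]
      no_square[of r s a x1] no_square[of r s a x2] no_square[of r s a x3]
      no_square[of r s b x1] no_square[of r s b x2] no_square[of r s b x3] no_square[of s a z b]
      r_s r_x s_x x_y r_y s_ab r_ab ab_z z_Y \<open>a \<noteq> b\<close> by (auto simp: insert_commute)
  show ?thesis
    using edge_ends by_triangle by_square s_x r_y r_ab \<open>a \<noteq> b\<close> z_Y by auto
qed

lemma config_nonadjacent:
  "{x1, x2} \<notin> E" "{x1, x3} \<notin> E" "{x2, x3} \<notin> E"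
  "{x1, y2} \<notin> E" "{x1, y3} \<notin> E" "{x2, y1} \<notin> E" "{x2, y3} \<notin> E" "{x3, y1} \<notin> E" "{x3, y2} \<notin> E"
  "{a, b} \<notin> E" "{a, z'} \<notin> E" "{z, b} \<notin> E"
  using no_triangle[of r x1 x2] no_triangle[of r x1 x3] no_triangle[of r x2 x3]
    no_square[of r x1 y2 x2] no_square[of r x1 y3 x3] no_square[of r x2 y1 x1]
    no_square[of r x2 y3 x3] no_square[of r x3 y1 x1] no_square[of r x3 y2 x2]
    no_triangle[of s a b] no_square[of s a z' b] no_square[of s b z a]
    config_vertices_distinct r_s r_x x_y s_ab ab_z by (auto simp: insert_commute)

lemma config_vertices_near_root:
  assumes "v \<in> {x1, y1, x2, y2, x3, y3, a, z, b, z'}"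
  shows "reach_within E 3 r v"
proof -
  have "reach_within E 1 r x1" "reach_within E 1 r x2" "reach_within E 1 r x3" "reach_within E 1 r s"
    using r_x r_s by simp_all
  then have "reach_within E 2 r y1" "reach_within E 2 r y2" "reach_within E 2 r y3"
      "reach_within E 2 r a" "reach_within E 2 r b"
    using x_y s_ab by (auto simp: numeral_2_eq_2)
  moreover from this(4,5) have "reach_within E 3 r z" "reach_within E 3 r z'"
    using reach_within_step[of E 2 r a z] reach_within_step[of E 2 r b z'] ab_z by simp_all
  ultimately show ?thesis
    using assms \<open>reach_within E 1 r x1\<close> \<open>reach_within E 1 r x2\<close> \<open>reach_within E 1 r x3\<close>
      reach_within_mono[of E 1 r _ 3] reach_within_mono[of E 2 r _ 3] by auto
qed

lemma root_config_of_vertices: "root_config r s {{x1, y1}, {x2, y2}, {x3, y3}} {{a, z}, {b, z'}}"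
proof -
  define T where "T = {{x1, y1}, {x2, y2}, {x3, y3}}"
  define Q where "Q = {{a, z}, {b, z'}}"
  note dist = config_vertices_distinct
  have near: "reach_within E 3 r v" if "v \<in> \<Union>(T \<union> Q)" for v
    using that config_vertices_near_root unfolding T_def Q_def by blast
  have root_out: "r \<notin> \<Union>(T \<union> Q)"
    using dist unfolding T_def Q_def by auto
  have "\<not> conflict E {x1, y1} {x2, y2}" "\<not> conflict E {x1, y1} {x3, y3}" "\<not> conflict E {x2, y2} {x3, y3}"
    "\<not> conflict E {a, z} {b, z'}"
    by (rule not_conflictI; use dist config_nonadjacent y_y \<open>{z, z'} \<notin> E\<close> in \<open>auto simp: insert_commute\<close>)+
  then have "pairwise (\<lambda>f g. \<not> conflict E f g) T" "pairwise (\<lambda>f g. \<not> conflict E f g) Q"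
    unfolding T_def Q_def by (auto simp: pairwise_insert conflict_sym)
  moreover have "\<forall>x. {r, x} \<in> E \<longrightarrow> (\<forall>f\<in>T. conflict E {r, x} f)"
    using root_out r_x unfolding T_def by (auto intro: conflictI)
  moreover have "\<forall>f\<in>Q. conflict E {r, s} f"
    using root_out s_ab unfolding Q_def by (auto intro: conflictI)
  moreover have "card T = 3" "card Q = 2" "T \<inter> Q = {}" "pairwise disjnt (T \<union> Q)"
    using dist unfolding T_def Q_def by (auto simp: doubleton_eq_iff pairwise_def disjnt_def)
  moreover have "T \<subseteq> E" "Q \<subseteq> E"
    unfolding T_def Q_def using x_y ab_z by auto
  ultimately show ?thesis
    unfolding root_config_def T_def[symmetric] Q_def[symmetric] using r_s near root_out by blast
qed

end

lemma root_config_exists: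
  assumes "r \<in> V"
  obtains s T Q where "root_config r s T Q"
proof -
  have "card (nbrs r) = 4"
    using card_nbrs assms by simp
  then have "nbrs r \<noteq> {}"
    by auto
  then obtain s where "s \<in> nbrs r"
    by blast
  then have "card (nbrs r - {s}) = 3"
    using \<open>card (nbrs r) = 4\<close> finite_nbrs by simp
  then obtain x1 x2 x3 where X: "nbrs r - {s} = {x1, x2, x3}" "distinct [x1, x2, x3]"
    by (auto simp: card_3_iff)
  have "x1 \<in> nbrs r" "x2 \<in> nbrs r" "x3 \<in> nbrs r" "s \<notin> {x1, x2, x3}"
    using X(1) by blast+
  then have r_s: "{r, s} \<in> E" and r_x: "{r, x1} \<in> E" "{r, x2} \<in> E" "{r, x3} \<in> E"
    and s_x: "distinct [s, x1, x2, x3]"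
    using \<open>s \<in> nbrs r\<close> X(2) by simp_all
  obtain y1 y2 y3 where y: "{x1, y1} \<in> E" "{x2, y2} \<in> E" "{x3, y3} \<in> E" "r \<notin> {y1, y2, y3}"
    "{y1, y2} \<notin> E" "{y1, y3} \<notin> E" "{y2, y3} \<notin> E"
    using exists_independent_second_nbrs[OF r_x X(2)] by blast
  have "s \<notin> {y1, y2, y3}"
    using no_triangle[of r x1 s] no_triangle[of r x2 s] no_triangle[of r x3 s] r_s r_x y
    by (auto simp: insert_commute)
  moreover have "card {y1, y2, y3} \<le> 3"
    by (auto simp: card_insert_if)
  ultimately obtain a b z z' where pair: "{s, a} \<in> E" "{s, b} \<in> E" "r \<notin> {a, b}" "a \<noteq> b"
    "{a, z} \<in> E" "{b, z'} \<in> E" "z \<notin> {s, y1, y2, y3}" "z' \<notin> {s, y1, y2, y3}" "{z, z'} \<notin> E"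
    using exists_nonadjacent_second_nbrs[OF r_s, of "{y1, y2, y3}"] by blast
  show thesis
    by (rule that) (rule root_config_of_vertices[OF r_s r_x s_x y pair])
qed

end

section \<open>Colouring around scattered roots\<close>

locale rooted_quartic_girth5_graph = quartic_girth5_graph V E for V :: "'a set" and E :: "'a set set" +
  fixes R :: "'a set" and spoke :: "'a \<Rightarrow> 'a" and T Q :: "'a \<Rightarrow> 'a set set"
  assumes roots_scattered: "scattered E 7 R"
    and roots_cover: "v \<in> V \<Longrightarrow> \<exists>r\<in>R. reach_within E 7 r v"
    and root_config: "r \<in> R \<Longrightarrow> root_config r (spoke r) (T r) (Q r)"
begin

definition precoloured :: "'a set set" where
  "precoloured = (\<Union>r\<in>R. T r \<union> Q r)"

definition precolour :: "'a set \<Rightarrow> nat" where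
  "precolour f = (if f \<in> (\<Union>r\<in>R. T r) then 0 else 1)"

definition root_dist :: "'a set \<Rightarrow> nat" where
  "root_dist e = (LEAST n. \<exists>r\<in>R. \<exists>x\<in>e. reach_within E n r x)"

(* Edges of smaller rank are coloured first. Every vertex is within distance 7 of a root, so
  8 - root_dist e never truncates. *)
definition colour_rank :: "'a set \<Rightarrow> nat" where
  "colour_rank e = (if e \<inter> R = {} then 8 - root_dist e else if \<exists>r\<in>R. e = {r, spoke r} then 10 else 9)"

lemmas config_at_root = root_configD[OF root_config]

lemma roots_apart: "r \<in> R \<Longrightarrow> r' \<in> R \<Longrightarrow> r \<noteq> r' \<Longrightarrow> \<not> reach_within E 7 r r'"
  using roots_scattered unfolding scattered_def by blast

lemma config_far_from_other_roots:
  assumes "r \<in> R" "r' \<in> R" "r \<noteq> r'" "reach_within E 3 r v"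
  shows "\<not> reach_within E 4 r' v"
proof
  assume "reach_within E 4 r' v"
  then have "reach_within E (3 + 4) r r'"
    using reach_within_trans[OF assms(4) reach_within_sym] by blast
  then show False
    using roots_apart[OF assms(1-3)] by simp
qed

lemma no_conflict_across_roots:
  assumes "r \<in> R" "r' \<in> R" "r \<noteq> r'" "f \<in> T r \<union> Q r" "g \<in> T r' \<union> Q r'"
  shows "\<not> conflict E f g"
proof
  assume "conflict E f g"
  then obtain h p q where h: "h \<in> E" "p \<in> h" "q \<in> h" and "p \<in> f" "q \<in> g"
    unfolding conflict_def by blast
  have "reach_within E (Suc 3) r' p"
    using reach_within_edge_mem[OF h] config_at_root(8)[OF assms(2,5) \<open>q \<in> g\<close>] .
  then show False
    using config_far_from_other_roots[OF assms(1-3)] config_at_root(8)[OF assms(1,4) \<open>p \<in> f\<close>]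
    by simp
qed

lemma precoloured_subset: "precoloured \<subseteq> E"
  using config_at_root(2,3) unfolding precoloured_def by blast

lemma precoloured_disjoint:
  assumes "f \<in> precoloured" "g \<in> precoloured" "f \<noteq> g"
  shows "f \<inter> g = {}"
proof -
  obtain r r' where r: "r \<in> R" "f \<in> T r \<union> Q r" and r': "r' \<in> R" "g \<in> T r' \<union> Q r'"
    using assms(1,2) unfolding precoloured_def by blast
  show ?thesis
  proof (cases "r = r'")
    case True
    then show ?thesis
      using config_at_root(9)[OF r(1)] r(2) r'(2) assms(3)
      unfolding pairwise_def disjnt_def by blast
  next
    case False
    have "f \<in> E"
      using assms(1) precoloured_subset by blast
    then show ?thesis
      using no_conflict_across_roots[OF r(1) r'(1) False r(2) r'(2)] assms(3)
      unfolding conflict_def by blast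
  qed
qed

lemma card_incident_precoloured: "card (incident p \<inter> precoloured) \<le> 1"
proof -
  have "f = g" if "f \<in> incident p \<inter> precoloured" "g \<in> incident p \<inter> precoloured" for f g
    using precoloured_disjoint that unfolding incident_def by blast
  then show ?thesis
    using finite_E unfolding incident_def by (simp add: card_le_Suc0_iff_eq)
qed

lemma root_notin_precoloured:
  assumes "r \<in> R" "f \<in> precoloured"
  shows "r \<notin> f"
proof
  assume "r \<in> f"
  obtain r' where r': "r' \<in> R" "f \<in> T r' \<union> Q r'"
    using assms(2) unfolding precoloured_def by blast
  show False
  proof (cases "r = r'")
    case True
    then show False
      using config_at_root(7)[OF r'] \<open>r \<in> f\<close> by blast
  next
    case False
    have "reach_within E 3 r' r"
      using config_at_root(8)[OF r' \<open>r \<in> f\<close>] .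
    then show False
      using roots_apart[OF r'(1) assms(1)] False reach_within_mono[of E 3 r' r 7] by auto
  qed
qed

lemma precolour_proper:
  assumes "f \<in> precoloured" "g \<in> precoloured" "conflict E f g"
  shows "precolour f \<noteq> precolour g"
proof
  assume same: "precolour f = precolour g"
  obtain r r' where r: "r \<in> R" "f \<in> T r \<union> Q r" and r': "r' \<in> R" "g \<in> T r' \<union> Q r'"
    using assms(1,2) unfolding precoloured_def by blast
  then have "r = r'"
    using no_conflict_across_roots assms(3) by blast
  have "f \<in> T r \<longleftrightarrow> g \<in> T r"
    using same r r' \<open>r = r'\<close> no_conflict_across_roots assms(3) unfolding precolour_def
    by (auto split: if_splits)
  then have "(f \<in> T r \<and> g \<in> T r) \<or> (f \<in> Q r \<and> g \<in> Q r)"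
    using r r' \<open>r = r'\<close> by blast
  moreover have "f \<noteq> g"
    using assms(3) by auto
  ultimately show False
    using config_at_root(10,11)[OF r(1)] assms(3) unfolding pairwise_def by blast
qed

lemma card_blocked_le:
  assumes "e \<in> E" "L \<subseteq> E - precoloured" "\<And>f. f \<in> L \<Longrightarrow> conflict E e f \<and> colour_rank e < colour_rank f"
    and "S \<subseteq> precoloured" "\<And>f. f \<in> S \<Longrightarrow> conflict E e f"
  shows "card {f \<in> E - precoloured. conflict E e f \<and> colour_rank f \<le> colour_rank e}
      + card (precolour ` {f \<in> precoloured. conflict E e f}) + card L + card S \<le> 24 + card (precolour ` S)"
proof -
  define N where "N = {f \<in> E. conflict E e f}"
  have eq: "{f \<in> precoloured. conflict E e f} = N \<inter> precoloured"
    unfolding N_def using precoloured_subset by blast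
  have "card N \<le> 24"
    unfolding N_def using card_conflicts_le[OF assms(1)] by simp
  moreover have "card {f \<in> E - precoloured. conflict E e f \<and> colour_rank f \<le> colour_rank e}
      + card (precolour ` (N \<inter> precoloured)) + card L + card S \<le> card N + card (precolour ` S)"
  proof (rule card_blocked_colours_le)
    show "finite N"
      unfolding N_def using finite_E by simp
    show "L \<subseteq> N - precoloured" "S \<subseteq> N \<inter> precoloured"
      unfolding N_def using assms(2-5) precoloured_subset by auto
    have "f \<notin> L" if "colour_rank f \<le> colour_rank e" for f
      using assms(3) that leD by blast
    then show "{f \<in> E - precoloured. conflict E e f \<and> colour_rank f \<le> colour_rank e} \<subseteq> N - precoloured - L"
      unfolding N_def by blast
  qed
  ultimately show ?thesis
    unfolding eq by linarith
qed

lemma card_blocked_spoke_edge: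
  assumes "r \<in> R"
  shows "card {f \<in> E - precoloured. conflict E {r, spoke r} f \<and> colour_rank f \<le> colour_rank {r, spoke r}}
      + card (precolour ` {f \<in> precoloured. conflict E {r, spoke r} f}) \<le> 21"
proof -
  note cfg = config_at_root[OF assms(1)]
  have "finite (T r)" "finite (Q r)"
    using cfg(4,5) by (auto intro: card_ge_0_finite)
  then have "card (T r \<union> Q r) = 5"
    using cfg(4-6) by (simp add: card_Un_disjoint)
  moreover have "card (precolour ` (T r \<union> Q r)) \<le> card {0, 1::nat}"
    unfolding precolour_def by (intro card_mono) auto
  moreover have "T r \<union> Q r \<subseteq> precoloured"
    using assms(1) unfolding precoloured_def by blast
  moreover have "conflict E {r, spoke r} f" if "f \<in> T r \<union> Q r" for f
    using cfg(1,12,13) that by blast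
  ultimately show ?thesis
    using card_blocked_le[of "{r, spoke r}" "{}" "T r \<union> Q r"] cfg(1) by simp
qed

lemma card_blocked_root_edge:
  assumes "r \<in> R" "{r, x} \<in> E" "x \<noteq> spoke r"
  shows "card {f \<in> E - precoloured. conflict E {r, x} f \<and> colour_rank f \<le> colour_rank {r, x}}
      + card (precolour ` {f \<in> precoloured. conflict E {r, x} f}) \<le> 21"
proof -
  note cfg = config_at_root[OF assms(1)]
  have "x \<notin> R"
    using roots_apart[OF assms(1), of x] reach_within_mono[of E 1 r x 7] assms(2) edge_neq by auto
  then have "colour_rank {r, x} = 9"
    using assms unfolding colour_rank_def by (auto simp: doubleton_eq_iff)
  moreover have "colour_rank {r, spoke r} = 10"
    using assms(1) unfolding colour_rank_def by auto
  moreover have "{r, spoke r} \<in> E - precoloured"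
    using cfg(1) root_notin_precoloured[OF assms(1)] by blast
  moreover have "conflict E {r, x} {r, spoke r}"
    using assms(2,3) by (intro conflictI[where g = "{r, x}" and u = r and w = r]) (auto simp: doubleton_eq_iff)
  moreover have "T r \<noteq> {}"
    using cfg(4) by auto
  then have "precolour ` T r = {0}"
    using assms(1) unfolding precolour_def by auto
  moreover have "T r \<subseteq> precoloured"
    using assms(1) unfolding precoloured_def by blast
  moreover have "conflict E {r, x} f" if "f \<in> T r" for f
    using cfg(12) assms(2) that .
  ultimately show ?thesis
    using card_blocked_le[of "{r, x}" "{{r, spoke r}}" "T r"] assms(2) cfg(4) by simp
qed

lemma root_dist_le: "r \<in> R \<Longrightarrow> x \<in> e \<Longrightarrow> reach_within E n r x \<Longrightarrow> root_dist e \<le> n"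
  unfolding root_dist_def by (rule Least_le) blast

lemma exists_vertex_closer_to_roots:
  assumes "e \<in> E" "e \<inter> R = {}"
  obtains p x where "x \<in> e" "{p, x} \<in> E" "p \<notin> e" "\<And>f. p \<in> f \<Longrightarrow> root_dist f < root_dist e"
    and "root_dist e \<le> 7"
proof -
  obtain u v where "u \<in> V" "e = {u, v}"
    using assms(1) by (auto elim: edgeE)
  then obtain r0 where "r0 \<in> R" "reach_within E 7 r0 u" "u \<in> e"
    using roots_cover by blast
  then have reached: "\<exists>r\<in>R. \<exists>x\<in>e. reach_within E 7 r x"
    by blast
  then have "root_dist e \<le> 7"
    unfolding root_dist_def by (rule Least_le)
  have "\<exists>r\<in>R. \<exists>x\<in>e. reach_within E (root_dist e) r x"
    unfolding root_dist_def using reached by (rule LeastI)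
  then obtain r x where rx: "r \<in> R" "x \<in> e" "reach_within E (root_dist e) r x"
    by blast
  obtain k where k: "root_dist e = Suc k"
    using rx assms(2) by (cases "root_dist e") auto
  have not_k: "\<not> reach_within E k r y" if "y \<in> e" for y
    using root_dist_le[OF rx(1) that, of k] k by linarith
  then obtain p where "reach_within E k r p" "{p, x} \<in> E"
    using rx k by auto
  moreover have "p \<notin> e"
    using not_k \<open>reach_within E k r p\<close> by blast
  moreover have "root_dist f < root_dist e" if "p \<in> f" for f
    using root_dist_le[OF rx(1) that \<open>reach_within E k r p\<close>] k by simp
  ultimately show thesis
    using that rx(2) \<open>root_dist e \<le> 7\<close> by blast
qed

lemma card_blocked_far_edge:
  assumes "e \<in> E" "e \<inter> R = {}"
  shows "card {f \<in> E - precoloured. conflict E e f \<and> colour_rank f \<le> colour_rank e}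
      + card (precolour ` {f \<in> precoloured. conflict E e f}) \<le> 21"
proof -
  obtain p x where px: "x \<in> e" "{p, x} \<in> E" "p \<notin> e" "\<And>f. p \<in> f \<Longrightarrow> root_dist f < root_dist e"
    and "root_dist e \<le> 7"
    using exists_vertex_closer_to_roots[OF assms] by blast
  define L where "L = incident p - precoloured"
  have "card (incident p) = 4"
    using card_incident edge_vertices px(2) by blast
  then have "3 \<le> card L"
    using card_incident_precoloured[of p] finite_E card_Int_Diff[of "incident p" precoloured]
    unfolding L_def incident_def by simp
  moreover have "conflict E e f \<and> colour_rank e < colour_rank f" if "f \<in> L" for f
  proof
    have "f \<in> E" "p \<in> f"
      using that unfolding L_def incident_def by auto
    then show "conflict E e f"
      using px(1-3) by (intro conflictI[where g = "{p, x}" and u = x and w = p]) auto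
    show "colour_rank e < colour_rank f"
      using px(4)[OF \<open>p \<in> f\<close>] \<open>root_dist e \<le> 7\<close> assms(2) unfolding colour_rank_def by auto
  qed
  moreover have "L \<subseteq> E - precoloured"
    unfolding L_def incident_def by blast
  ultimately show ?thesis
    using card_blocked_le[of e L "{}"] assms(1) by simp
qed

lemma conflict_free_colouring_22:
  "\<exists>col :: 'a set \<Rightarrow> nat. (\<forall>e\<in>E. col e < 22) \<and> (\<forall>e\<in>E. \<forall>f\<in>E. conflict E e f \<longrightarrow> col e \<noteq> col f)"
proof -
  have blocked: "card {f \<in> E - precoloured. conflict E e f \<and> colour_rank f \<le> colour_rank e}
      + card (precolour ` {f \<in> precoloured. conflict E e f}) < 22" if e: "e \<in> E - precoloured" for e
  proof (cases "e \<inter> R = {}")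
    case True
    then show ?thesis
      using card_blocked_far_edge[OF _ True] e by fastforce
  next
    case False
    then obtain r where r: "r \<in> R" "r \<in> e"
      by blast
    then obtain x where x: "e = {r, x}"
      using e by (auto elim: edge_memE)
    show ?thesis
    proof (cases "x = spoke r")
      case True
      then show ?thesis
        using card_blocked_spoke_edge[OF r(1)] x by simp
    next
      case False
      then show ?thesis
        using card_blocked_root_edge[OF r(1) _ False] e x by simp
    qed
  qed
  have "\<exists>col. (\<forall>e\<in>(E - precoloured) \<union> precoloured. col e < (22::nat)) \<and>
      (\<forall>e\<in>(E - precoloured) \<union> precoloured. \<forall>f\<in>(E - precoloured) \<union> precoloured.
        conflict E e f \<longrightarrow> col e \<noteq> col f)"
  proof (rule greedy_colouring_extension[where rank = colour_rank and pre = precolour])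
    show "finite (E - precoloured)" "finite precoloured"
      using finite_E precoloured_subset by (auto intro: finite_subset)
  qed (use conflict_sym precolour_proper blocked in \<open>auto simp: precolour_def\<close>)
  moreover have "(E - precoloured) \<union> precoloured = E"
    using precoloured_subset by blast
  ultimately show ?thesis
    by simp
qed

end

context quartic_girth5_graph
begin

lemma exists_conflict_free_colouring_22:
  "\<exists>col :: 'a set \<Rightarrow> nat. (\<forall>e\<in>E. col e < 22) \<and> (\<forall>e\<in>E. \<forall>f\<in>E. conflict E e f \<longrightarrow> col e \<noteq> col f)"
proof -
  obtain R where R: "R \<subseteq> V" "scattered E 7 R" "\<And>v. v \<in> V \<Longrightarrow> \<exists>r\<in>R. reach_within E 7 r v"
    using exists_scattered_cover[OF finite_V] by blast
  have "\<forall>r\<in>R. \<exists>s T Q. root_config r s T Q"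
    using root_config_exists R(1) by (meson subsetD)
  then obtain spoke T Q where "\<And>r. r \<in> R \<Longrightarrow> root_config r (spoke r) (T r) (Q r)"
    by metis
  then interpret rooted_quartic_girth5_graph V E R spoke T Q
    using R by unfold_locales auto
  show ?thesis
    by (rule conflict_free_colouring_22)
qed

end

theorem lemma8:
  fixes V :: "'a set" and E :: "'a set set"
  assumes "simple_graph V E"
    and "regular V E 4"
    and "girth E = 5"
  shows "\<exists>col :: 'a set \<Rightarrow> nat. strong_edge_coloring E col \<and> card (col ` E) \<le> 22"
proof -
  interpret quartic_girth5_graph V E
    using assms by unfold_locales simp_all
  obtain col :: "'a set \<Rightarrow> nat" where col: "\<forall>e\<in>E. col e < 22"
    "\<forall>e\<in>E. \<forall>f\<in>E. conflict E e f \<longrightarrow> col e \<noteq> col f"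
    using exists_conflict_free_colouring_22 by blast
  have "strong_edge_coloring E col"
    using col(2) by (intro strong_edge_coloringI) blast
  moreover have "card (col ` E) \<le> card {..<22::nat}"
    using col(1) by (intro card_mono) auto
  ultimately show ?thesis
    by auto
qed

end
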